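(* Let $F\colon\mathbb{N}\to(0,\infty)$ satisfy $\sum_{k=1}^\infty1/F(k)<\infty$, and let $\Xi$ be the birth process with rate function $F$ and initial value $\Xi(0)\in\mathbb{N}$, with explosion time $T$. For $x\ge\Xi(0)$ let $g_x$ be the density of $T(x)=\sum_{l=\Xi(0)}^x\tau(l)$. Then there exist constants $C<\infty$ and $x_0$ such that for all $x\ge x_0$ and all $t\ge0$, $$\mathbb{P}(\Xi(t)=x)\le C\,\frac{g_x(t)}{F(x)}\qquad\text{and}\qquad \mathbb{P}(\Xi(t)>x\mid T>t)\le C\,\frac{g_x(t)}{\mathbb{P}(T>t)}\sum_{k=x+1}^\infty\frac{1}{F(k)}.$$ (That is, $\mathbb{P}(\Xi(t)=x)\prec g_x(t)/F(x)$ and the conditional tail bound hold as $x\to\infty$, globally uniformly in $t\ge0$.)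
   Context: $\mathbb{N}=\{1,2,\dots\}$. The $\tau(k)$, $k\ge\Xi(0)$, are independent, $\tau(k)$ exponential with rate $F(k)$; $\Xi(t)=\min\{k:\sum_{l=\Xi(0)}^k\tau(l)>t\}$ (min of empty set $=\infty$) and $T=\sum_{k\ge\Xi(0)}\tau(k)$. For sequences, $x_k\prec y_k$ means $\limsup x_k/y_k<\infty$. *)

theory Defs
  imports "HOL-Probability.Probability"
begin

definition birth_state :: "nat \<Rightarrow> (nat \<Rightarrow> 'a \<Rightarrow> real) \<Rightarrow> real \<Rightarrow> 'a \<Rightarrow> enat" where
  "birth_state n0 \<tau> t \<omega> =
     (if \<exists>k\<ge>n0. (\<Sum>l=n0..k. \<tau> l \<omega>) > t
      then enat (LEAST k. k \<ge> n0 \<and> (\<Sum>l=n0..k. \<tau> l \<omega>) > t)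
      else \<infinity>)"

definition explosion_time :: "nat \<Rightarrow> (nat \<Rightarrow> 'a \<Rightarrow> real) \<Rightarrow> 'a \<Rightarrow> real" where
  "explosion_time n0 \<tau> \<omega> = (\<Sum>k. \<tau> (n0 + k) \<omega>)"

end

theory Submission
  imports Defs "HOL-Real_Asymp.Real_Asymp"
begin

text \<open>
  Write T(x) = \<tau>(n0) + ... + \<tau>(x) for the time of the jump out of x, and \<mu> = F(n0).
  Every T(x) contains the independent Exp(\<mu>) summand \<tau>(n0), so a \<mapsto> e^(\<mu> a) P(a < T(x) \<le> a + h)
  is nondecreasing. Hence adding the next holding time \<tau>(x+1) ~ Exp(F(x+1)) enlarges every window
  probability P(t < T(x) \<le> t + h) by at most the factor F(x+1)/(F(x+1) - \<mu>), which is at most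
  exp(2\<mu>/F(x+1)) once F(x+1) > 2\<mu>; as \<Sum> 1/F(k) < \<infinity>, the windows of T(k), k \<ge> x, are
  uniformly at most C times those of T(x). By memorylessness
  P(\<Xi>(t) = k) (1 - e^(-F(k) h)) \<le> P(t < T(k) \<le> t + h); dividing by h and letting h \<rightarrow> 0 gives
  P(\<Xi>(t) = k) F(k) \<le> C g_x(t). The case k = x is the first bound; summing over k > x gives the
  second, since on {T > t} the process has not exploded by time t.
\<close>

lemma tendsto_one_minus_exp_div:
  fixes c :: real
  shows "((\<lambda>h. (1 - exp (- c * h)) / h) \<longlongrightarrow> c) (at_right 0)"
  by real_asymp

lemma div_diff_le_exp:
  fixes l \<mu> :: real
  assumes "0 \<le> \<mu>" "2 * \<mu> < l"
  shows "l / (l - \<mu>) \<le> exp (2 * \<mu> / l)"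
proof -
  have "l / (l - \<mu>) = 1 + \<mu> / (l - \<mu>)" using assms by (simp add: field_simps)
  also have "\<dots> \<le> 1 + 2 * \<mu> / l"
  proof -
    have "\<mu> * (2 * \<mu>) \<le> \<mu> * l" using assms by (intro mult_left_mono) auto
    then show ?thesis using assms by (simp add: field_simps)
  qed
  also have "\<dots> \<le> exp (2 * \<mu> / l)" by (rule exp_ge_add_one_self)
  finally show ?thesis .
qed

lemma nn_integral_exponential_density:
  assumes "0 < l"
  shows "(\<integral>\<^sup>+u. ennreal (exponential_density l u) \<partial>lborel) = 1"
proof -
  interpret prob_space "density lborel (\<lambda>u. ennreal (exponential_density l u))"
    using prob_space_exponential_density[OF assms] .
  show ?thesis using emeasure_space_1 by (simp add: emeasure_density)
qed

context prob_space
begin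

definition window_prob :: "('a \<Rightarrow> real) \<Rightarrow> real \<Rightarrow> real \<Rightarrow> real" where
  "window_prob X t h = prob {\<omega> \<in> space M. t < X \<omega> \<and> X \<omega> \<le> t + h}"

definition exp_tilted_mono :: "real \<Rightarrow> ('a \<Rightarrow> real) \<Rightarrow> bool" where
  "exp_tilted_mono \<mu> X \<longleftrightarrow> (\<forall>h. mono (\<lambda>a. exp (\<mu> * a) * window_prob X a h))"

lemma window_prob_nonneg: "0 \<le> window_prob X t h"
  by (simp add: window_prob_def)

lemma window_prob_nonpos_width:
  assumes "h \<le> 0"
  shows "window_prob X t h = 0"
proof -
  have empty: "{\<omega> \<in> space M. t < X \<omega> \<and> X \<omega> \<le> t + h} = {}" using assms by auto
  show ?thesis unfolding window_prob_def empty by simp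
qed

lemma emeasure_indep_pair:
  assumes ind: "indep_var borel A borel B" and S: "S \<in> sets (borel \<Otimes>\<^sub>M borel)"
  shows "emeasure M {\<omega>\<in>space M. (A \<omega>, B \<omega>) \<in> S} =
    (\<integral>\<^sup>+r. emeasure M {\<omega>\<in>space M. (r, B \<omega>) \<in> S} \<partial>distr M borel A)"
proof -
  have A: "A \<in> borel_measurable M" and B: "B \<in> borel_measurable M"
    using ind by (auto dest: indep_var_rv1 indep_var_rv2)
  interpret B: prob_space "distr M borel B" using B by (rule prob_space_distr)
  have sec: "emeasure (distr M borel B) (Pair r -` S) = emeasure M {\<omega>\<in>space M. (r, B \<omega>) \<in> S}" for r
    using B sets_Pair1[OF S] by (subst emeasure_distr) (auto intro!: arg_cong[where f="emeasure M"])
  have "emeasure M {\<omega>\<in>space M. (A \<omega>, B \<omega>) \<in> S} = emeasure (distr M (borel \<Otimes>\<^sub>M borel) (\<lambda>\<omega>. (A \<omega>, B \<omega>))) S"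
    using A B S by (subst emeasure_distr) (auto intro: measurable_Pair simp: vimage_def Int_def conj_commute)
  also have "\<dots> = emeasure (distr M borel A \<Otimes>\<^sub>M distr M borel B) S"
    using ind indep_var_distribution_eq by metis
  also have "\<dots> = (\<integral>\<^sup>+r. emeasure (distr M borel B) (Pair r -` S) \<partial>distr M borel A)"
    using S by (intro B.emeasure_pair_measure_alt) simp
  finally show ?thesis by (simp only: sec)
qed

lemma measurable_emeasure_section:
  assumes B: "B \<in> borel_measurable M" and S: "S \<in> sets (borel \<Otimes>\<^sub>M borel)"
  shows "(\<lambda>r. emeasure M {\<omega>\<in>space M. (r, B \<omega>) \<in> S}) \<in> borel_measurable borel"
proof -
  interpret B: prob_space "distr M borel B" using B by (rule prob_space_distr)
  have "emeasure (distr M borel B) (Pair r -` S) = emeasure M {\<omega>\<in>space M. (r, B \<omega>) \<in> S}" for r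
    using B sets_Pair1[OF S] by (subst emeasure_distr) (auto intro!: arg_cong[where f="emeasure M"])
  moreover have "(\<lambda>r. emeasure (distr M borel B) (Pair r -` S)) \<in> borel_measurable borel"
    using S by (intro B.measurable_emeasure_Pair) simp
  ultimately show ?thesis by simp
qed

lemma window_prob_add_indep:
  assumes ind: "indep_var borel A borel B"
  shows "ennreal (window_prob (\<lambda>\<omega>. A \<omega> + B \<omega>) t h) =
    (\<integral>\<^sup>+u. ennreal (window_prob B (t - u) h) \<partial>distr M borel A)"
proof -
  let ?S = "{p \<in> space (borel \<Otimes>\<^sub>M borel). t < fst p + snd p \<and> fst p + snd p \<le> t + h}"
  have S: "?S \<in> sets (borel \<Otimes>\<^sub>M borel)" by measurable
  have "ennreal (window_prob (\<lambda>\<omega>. A \<omega> + B \<omega>) t h) = emeasure M {\<omega>\<in>space M. (A \<omega>, B \<omega>) \<in> ?S}"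
    by (auto simp: window_prob_def emeasure_eq_measure space_pair_measure intro!: arg_cong[where f=prob])
  also have "\<dots> = (\<integral>\<^sup>+u. emeasure M {\<omega>\<in>space M. (u, B \<omega>) \<in> ?S} \<partial>distr M borel A)"
    by (rule emeasure_indep_pair[OF ind S])
  also have "\<dots> = (\<integral>\<^sup>+u. ennreal (window_prob B (t - u) h) \<partial>distr M borel A)"
    by (auto simp: window_prob_def emeasure_eq_measure space_pair_measure
        intro!: nn_integral_cong arg_cong[where f=prob])
  finally show ?thesis .
qed

lemma measurable_window_prob_shift:
  assumes "B \<in> borel_measurable M"
  shows "(\<lambda>u. ennreal (window_prob B (t - u) h)) \<in> borel_measurable borel"
proof -
  let ?S = "{p \<in> space (borel \<Otimes>\<^sub>M borel). t < fst p + snd p \<and> fst p + snd p \<le> t + h}"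
  have S: "?S \<in> sets (borel \<Otimes>\<^sub>M borel)" by measurable
  have "emeasure M {\<omega>\<in>space M. (u, B \<omega>) \<in> ?S} = ennreal (window_prob B (t - u) h)" for u
    by (auto simp: window_prob_def emeasure_eq_measure space_pair_measure intro!: arg_cong[where f=prob])
  then show ?thesis using measurable_emeasure_section[OF assms S] by simp
qed

lemma indep_var_sum_disjoint:
  fixes X :: "'i \<Rightarrow> 'a \<Rightarrow> real"
  assumes "indep_vars (\<lambda>_. borel) X N" and "I \<inter> J = {}" "I \<subseteq> N" "J \<subseteq> N"
  shows "indep_var borel (\<lambda>\<omega>. \<Sum>i\<in>I. X i \<omega>) borel (\<lambda>\<omega>. \<Sum>j\<in>J. X j \<omega>)"
proof -
  have sum_measurable: "(\<lambda>f. \<Sum>i\<in>K. f i) \<in> borel_measurable (PiM K (\<lambda>_. borel :: real measure))" for K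
    by (intro borel_measurable_sum measurable_component_singleton) auto
  have "indep_var borel ((\<lambda>f. \<Sum>i\<in>I. f i) \<circ> (\<lambda>\<omega>. restrict (\<lambda>i. X i \<omega>) I))
      borel ((\<lambda>f. \<Sum>i\<in>J. f i) \<circ> (\<lambda>\<omega>. restrict (\<lambda>i. X i \<omega>) J))"
    using indep_var_restrict[OF assms] sum_measurable sum_measurable by (rule indep_var_compose)
  moreover have "(\<lambda>f. \<Sum>i\<in>K. f i) \<circ> (\<lambda>\<omega>. restrict (\<lambda>i. X i \<omega>) K) = (\<lambda>\<omega>. \<Sum>i\<in>K. X i \<omega>)" for K
    by (auto simp: fun_eq_iff intro!: sum.cong)
  ultimately show ?thesis by simp
qed

lemma window_prob_add_ge:
  assumes ind: "indep_var borel A borel X"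
  shows "window_prob A a s * window_prob X c s' \<le> window_prob (\<lambda>\<omega>. A \<omega> + X \<omega>) (a + c) (s + s')"
proof -
  have "A \<in> borel_measurable M" "X \<in> borel_measurable M"
    using ind by (auto dest: indep_var_rv1 indep_var_rv2)
  have "window_prob A a s * window_prob X c s' = prob ((\<lambda>\<omega>. (A \<omega>, X \<omega>)) -` ({a<..a+s} \<times> {c<..c+s'}) \<inter> space M)"
    unfolding window_prob_def
    by (subst indep_varD[OF ind]) (auto intro!: arg_cong2[where f="(*)"] arg_cong[where f=prob])
  also have "\<dots> \<le> window_prob (\<lambda>\<omega>. A \<omega> + X \<omega>) (a + c) (s + s')"
    unfolding window_prob_def
    using \<open>A \<in> borel_measurable M\<close> \<open>X \<in> borel_measurable M\<close> by (intro finite_measure_mono) auto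
  finally show ?thesis .
qed

lemma prob_exponential_le:
  assumes D: "distributed M lborel X (\<lambda>s. ennreal (exponential_density l s))" and l: "0 < l"
  shows "prob {\<omega>\<in>space M. X \<omega> \<le> a} = 1 - exp (- l * max a 0)"
proof (cases "0 \<le> a")
  case True
  then show ?thesis using exponential_distributedD_le[OF D True l] by (simp add: mult.commute)
next
  case False
  have "X \<in> borel_measurable M" using distributed_measurable[OF D] by simp
  then have "prob {\<omega>\<in>space M. X \<omega> \<le> a} \<le> prob {\<omega>\<in>space M. X \<omega> \<le> 0}"
    using False by (intro finite_measure_mono) auto
  also have "\<dots> = 0" using exponential_distributedD_le[OF D _ l, of 0] by simp
  finally show ?thesis using False by (simp add: antisym)
qed

lemma AE_exponential_nonneg:
  assumes D: "distributed M lborel X (\<lambda>s. ennreal (exponential_density l s))" and l: "0 < l"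
  shows "AE \<omega> in M. 0 \<le> X \<omega>"
proof -
  have Xm: "X \<in> borel_measurable M" using distributed_measurable[OF D] by simp
  then have "prob {\<omega>\<in>space M. X \<omega> < 0} \<le> prob {\<omega>\<in>space M. X \<omega> \<le> 0}"
    by (intro finite_measure_mono) auto
  then have "prob {\<omega>\<in>space M. X \<omega> < 0} = 0"
    using prob_exponential_le[OF D l, of 0] by (simp add: antisym)
  then show ?thesis
    using Xm by (subst AE_iff_measurable[of "{\<omega>\<in>space M. X \<omega> < 0}"]) (auto simp: emeasure_eq_measure)
qed

lemma window_prob_exponential:
  assumes D: "distributed M lborel X (\<lambda>s. ennreal (exponential_density l s))" and l: "0 < l"
    and h: "0 \<le> h"
  shows "window_prob X a h = exp (- l * max a 0) - exp (- l * max (a + h) 0)"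
proof -
  have "X \<in> borel_measurable M" using distributed_measurable[OF D] by simp
  have "{\<omega>\<in>space M. a < X \<omega> \<and> X \<omega> \<le> a + h} =
      {\<omega>\<in>space M. X \<omega> \<le> a + h} - {\<omega>\<in>space M. X \<omega> \<le> a}"
    by auto
  then have "window_prob X a h = prob ({\<omega>\<in>space M. X \<omega> \<le> a + h} - {\<omega>\<in>space M. X \<omega> \<le> a})"
    by (simp only: window_prob_def)
  also have "\<dots> = prob {\<omega>\<in>space M. X \<omega> \<le> a + h} - prob {\<omega>\<in>space M. X \<omega> \<le> a}"
    using \<open>X \<in> borel_measurable M\<close> h by (intro finite_measure_Diff) auto
  finally show ?thesis using prob_exponential_le[OF D l] by simp
qed

lemma window_prob_exponential_pos:
  assumes D: "distributed M lborel X (\<lambda>s. ennreal (exponential_density l s))" and l: "0 < l"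
    and "0 \<le> t" "0 < h"
  shows "0 < window_prob X t h"
  using assms by (simp add: window_prob_exponential[OF D l])

lemma exp_tilted_mono_exponential:
  assumes D: "distributed M lborel X (\<lambda>s. ennreal (exponential_density l s))" and l: "0 < l"
  shows "exp_tilted_mono l X"
  unfolding exp_tilted_mono_def
proof
  fix h :: real
  show "mono (\<lambda>a. exp (l * a) * window_prob X a h)"
  proof (cases "0 \<le> h")
    case h: True
    have tilted: "exp (l * a) * window_prob X a h =
        (if a + h \<le> 0 then 0 else exp (l * min a 0) - exp (- l * h))" for a
    proof -
      have "exp (l * a) * window_prob X a h =
          exp (l * a - l * max a 0) - exp (l * a - l * max (a + h) 0)"
        by (simp add: window_prob_exponential[OF D l h] right_diff_distrib exp_add[symmetric])
      also have "\<dots> = (if a + h \<le> 0 then 0 else exp (l * min a 0) - exp (- l * h))"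
        using h by (cases "a + h \<le> 0"; cases "a \<le> 0") (auto simp: max_def min_def algebra_simps)
      finally show ?thesis .
    qed
    have "exp (- l * h) \<le> exp (l * min a 0)" if "0 < a + h" for a
    proof -
      have "l * (- h) \<le> l * min a 0" using that l h by (intro mult_left_mono) auto
      then show ?thesis by simp
    qed
    moreover have "exp (l * min a 0) \<le> exp (l * min b 0)" if "a \<le> b" for a b
      using that l by (auto simp: min_def)
    ultimately show ?thesis unfolding tilted by (intro monoI) force
  qed (simp add: window_prob_nonpos_width monoI)
qed

lemma exp_tilted_mono_add:
  assumes ind: "indep_var borel A borel X" and X: "exp_tilted_mono \<mu> X"
  shows "exp_tilted_mono \<mu> (\<lambda>\<omega>. A \<omega> + X \<omega>)"
  unfolding exp_tilted_mono_def
proof (intro allI monoI)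
  fix h a b :: real assume "a \<le> b"
  have Xm: "X \<in> borel_measurable M" using ind by (auto dest: indep_var_rv2)
  let ?W = "\<lambda>c. exp (\<mu> * c) * window_prob X c h"
  have conv: "ennreal (exp (\<mu> * c) * window_prob (\<lambda>\<omega>. A \<omega> + X \<omega>) c h) =
      (\<integral>\<^sup>+u. ennreal (exp (\<mu> * u)) * ennreal (?W (c - u)) \<partial>distr M borel A)" for c
  proof -
    have "exp (\<mu> * u) * ?W (c - u) = exp (\<mu> * c) * window_prob X (c - u) h" for u
      by (simp add: mult.assoc[symmetric] exp_add[symmetric] algebra_simps)
    then have "ennreal (exp (\<mu> * u)) * ennreal (?W (c - u)) =
        ennreal (exp (\<mu> * c)) * ennreal (window_prob X (c - u) h)" for u
      by (simp add: ennreal_mult[symmetric] window_prob_nonneg)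
    then show ?thesis
      using measurable_window_prob_shift[OF Xm]
      by (simp add: ennreal_mult window_prob_nonneg window_prob_add_indep[OF ind] nn_integral_cmult)
  qed
  have "mono ?W" using X unfolding exp_tilted_mono_def by blast
  then have "?W (a - u) \<le> ?W (b - u)" for u
    using \<open>a \<le> b\<close> by (auto dest: monoD[of _ "a - u" "b - u"])
  then have "ennreal (exp (\<mu> * a) * window_prob (\<lambda>\<omega>. A \<omega> + X \<omega>) a h) \<le>
      ennreal (exp (\<mu> * b) * window_prob (\<lambda>\<omega>. A \<omega> + X \<omega>) b h)"
    unfolding conv by (intro nn_integral_mono mult_left_mono ennreal_leI) auto
  then show "exp (\<mu> * a) * window_prob (\<lambda>\<omega>. A \<omega> + X \<omega>) a h \<le>
      exp (\<mu> * b) * window_prob (\<lambda>\<omega>. A \<omega> + X \<omega>) b h"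
    by (simp add: ennreal_le_iff window_prob_nonneg)
qed

lemma window_prob_shift_le:
  assumes "exp_tilted_mono \<mu> A" "0 \<le> u"
  shows "window_prob A (t - u) h \<le> exp (\<mu> * u) * window_prob A t h"
proof -
  have "mono (\<lambda>a. exp (\<mu> * a) * window_prob A a h)"
    using assms(1) unfolding exp_tilted_mono_def by blast
  then have "exp (\<mu> * (t - u)) * window_prob A (t - u) h \<le> exp (\<mu> * t) * window_prob A t h"
    using assms(2) by (auto dest: monoD[of _ "t - u" t])
  then have "exp (\<mu> * t) * window_prob A (t - u) h \<le> exp (\<mu> * t) * (exp (\<mu> * u) * window_prob A t h)"
    by (simp add: exp_diff right_diff_distrib field_simps)
  then show ?thesis by simp
qed

lemma window_prob_add_exponential_le:
  assumes ind: "indep_var borel X borel A"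
    and D: "distributed M lborel X (\<lambda>s. ennreal (exponential_density l s))"
    and A: "exp_tilted_mono \<mu> A" and \<mu>: "0 \<le> \<mu>" "\<mu> < l"
  shows "window_prob (\<lambda>\<omega>. X \<omega> + A \<omega>) t h \<le> l / (l - \<mu>) * window_prob A t h"
proof -
  have l: "0 < l" using \<mu> by simp
  have Am: "A \<in> borel_measurable M" using ind by (auto dest: indep_var_rv2)
  have distr_X: "distr M borel X = density lborel (\<lambda>s. ennreal (exponential_density l s))"
    using distributed_distr_eq_density[OF D] by (metis distr_cong sets_lborel)
  have "ennreal (window_prob (\<lambda>\<omega>. X \<omega> + A \<omega>) t h) =
      (\<integral>\<^sup>+u. ennreal (exponential_density l u) * ennreal (window_prob A (t - u) h) \<partial>lborel)"
    using measurable_window_prob_shift[OF Am] distributed_borel_measurable[OF D]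
    by (simp add: window_prob_add_indep[OF ind] distr_X nn_integral_density)
  txt \<open>The window at \<open>t - u\<close> is at most \<open>e^(\<mu> u)\<close> times the one at \<open>t\<close>, which turns the
    Exp(l) density into l/(l - \<mu>) times the Exp(l - \<mu>) density.\<close>
  also have "\<dots> \<le> (\<integral>\<^sup>+u. ennreal (l / (l - \<mu>) * window_prob A t h) *
      ennreal (exponential_density (l - \<mu>) u) \<partial>lborel)"
  proof (intro nn_integral_mono)
    fix u :: real
    show "ennreal (exponential_density l u) * ennreal (window_prob A (t - u) h) \<le>
        ennreal (l / (l - \<mu>) * window_prob A t h) * ennreal (exponential_density (l - \<mu>) u)"
    proof (cases "0 \<le> u")
      case True
      have "l * exp (- u * l) * window_prob A (t - u) h \<le> l * exp (- u * l) * (exp (\<mu> * u) * window_prob A t h)"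
        using window_prob_shift_le[OF A True] l by (intro mult_left_mono) auto
      also have "\<dots> = l / (l - \<mu>) * window_prob A t h * ((l - \<mu>) * exp (- u * (l - \<mu>)))"
      proof -
        have "exp (- u * (l - \<mu>)) = exp (\<mu> * u) * exp (- u * l)"
          by (simp add: exp_add[symmetric] algebra_simps)
        then show ?thesis using \<mu> by (simp add: field_simps)
      qed
      finally show ?thesis
        using True l \<mu> by (simp add: exponential_density_def ennreal_mult[symmetric] window_prob_nonneg)
    qed (simp add: exponential_density_def)
  qed
  also have "\<dots> = ennreal (l / (l - \<mu>) * window_prob A t h)"
    using \<mu> by (simp add: nn_integral_cmult nn_integral_exponential_density)
  finally show ?thesis
    using \<mu> by (simp add: ennreal_le_iff window_prob_nonneg)
qed

lemma prob_exponential_overshoot: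
  assumes ind: "indep_var borel A borel X"
    and D: "distributed M lborel X (\<lambda>s. ennreal (exponential_density l s))" and l: "0 < l"
    and h: "0 \<le> h"
  shows "prob {\<omega>\<in>space M. A \<omega> \<le> t \<and> t < A \<omega> + X \<omega> \<and> A \<omega> + X \<omega> \<le> t + h}
     = (1 - exp (- l * h)) * prob {\<omega>\<in>space M. A \<omega> \<le> t \<and> t < A \<omega> + X \<omega>}"
proof -
  let ?S1 = "{p \<in> space (borel \<Otimes>\<^sub>M borel). fst p \<le> t \<and> t < fst p + snd p \<and> fst p + snd p \<le> t + h}"
  let ?S2 = "{p \<in> space (borel \<Otimes>\<^sub>M borel). fst p \<le> t \<and> t < fst p + snd p}"
  have S1: "?S1 \<in> sets (borel \<Otimes>\<^sub>M borel)" and S2: "?S2 \<in> sets (borel \<Otimes>\<^sub>M borel)" by measurable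
  have Xm: "X \<in> borel_measurable M" using ind by (auto dest: indep_var_rv2)
  have c: "0 \<le> 1 - exp (- l * h)" using l h by simp
  have sections: "emeasure M {\<omega>\<in>space M. (r, X \<omega>) \<in> ?S1} =
      ennreal (1 - exp (- l * h)) * emeasure M {\<omega>\<in>space M. (r, X \<omega>) \<in> ?S2}" for r
  proof (cases "r \<le> t")
    case True
    have "{\<omega>\<in>space M. (r, X \<omega>) \<in> ?S1} = {\<omega>\<in>space M. t - r < X \<omega> \<and> X \<omega> \<le> t - r + h}"
      and "{\<omega>\<in>space M. (r, X \<omega>) \<in> ?S2} = space M - {\<omega>\<in>space M. X \<omega> \<le> t - r}"
      using True by (auto simp: space_pair_measure)
    moreover have "prob (space M - {\<omega>\<in>space M. X \<omega> \<le> t - r}) = 1 - prob {\<omega>\<in>space M. X \<omega> \<le> t - r}"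
      using Xm by (subst finite_measure_Diff) (auto simp: prob_space)
    moreover have "exp (- l * (t - r)) - exp (- l * max (t - r + h) 0) = (1 - exp (- l * h)) * exp (- l * (t - r))"
      using True h by (simp add: algebra_simps exp_add[symmetric])
    ultimately show ?thesis
      using True c window_prob_exponential[OF D l h, of "t - r"] prob_exponential_le[OF D l, of "t - r"]
      by (simp add: emeasure_eq_measure window_prob_def ennreal_mult[symmetric])
  qed simp
  have "emeasure M {\<omega>\<in>space M. A \<omega> \<le> t \<and> t < A \<omega> + X \<omega> \<and> A \<omega> + X \<omega> \<le> t + h}
      = emeasure M {\<omega>\<in>space M. (A \<omega>, X \<omega>) \<in> ?S1}"
    by (auto simp: space_pair_measure intro!: arg_cong[where f="emeasure M"])
  also have "\<dots> = ennreal (1 - exp (- l * h)) * (\<integral>\<^sup>+r. emeasure M {\<omega>\<in>space M. (r, X \<omega>) \<in> ?S2} \<partial>distr M borel A)"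
    unfolding emeasure_indep_pair[OF ind S1] sections
    using measurable_emeasure_section[OF Xm S2] by (simp add: nn_integral_cmult)
  also have "\<dots> = ennreal (1 - exp (- l * h)) * emeasure M {\<omega>\<in>space M. A \<omega> \<le> t \<and> t < A \<omega> + X \<omega>}"
    unfolding emeasure_indep_pair[OF ind S2, symmetric]
    by (auto simp: space_pair_measure intro!: arg_cong[where f="emeasure M"])
  finally show ?thesis
    using c by (simp add: emeasure_eq_measure ennreal_mult[symmetric])
qed

text \<open>Only \<open>ennreal (g s)\<close> is a density, so \<open>g\<close> may be negative: hence \<open>max 0\<close> here, and
  nonnegativity of \<open>g\<close> at \<open>t\<close> needs the positivity of windows (next lemma).\<close>

lemma window_prob_le_density:
  assumes D: "distributed M lborel X (\<lambda>s. ennreal (g s))" and g: "continuous_on {0..} g"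
    and t: "0 \<le> t" and \<epsilon>: "0 < \<epsilon>"
  shows "\<forall>\<^sub>F h in at_right 0. window_prob X t h \<le> max 0 (g t + \<epsilon>) * h"
proof -
  obtain d where d: "0 < d" "\<And>s. 0 \<le> s \<Longrightarrow> dist s t < d \<Longrightarrow> dist (g s) (g t) < \<epsilon>"
    using g t \<epsilon> unfolding continuous_on_iff by (metis atLeast_iff)
  have "window_prob X t h \<le> max 0 (g t + \<epsilon>) * h" if h: "0 < h" "h < d" for h
  proof -
    have "ennreal (window_prob X t h) = emeasure M (X -` {t<..t+h} \<inter> space M)"
      by (auto simp: window_prob_def emeasure_eq_measure intro!: arg_cong[where f=prob])
    also have "\<dots> = (\<integral>\<^sup>+s. ennreal (g s) * indicator {t<..t+h} s \<partial>lborel)"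
      by (rule distributed_emeasure[OF D]) simp
    also have "\<dots> \<le> (\<integral>\<^sup>+s. ennreal (max 0 (g t + \<epsilon>)) * indicator {t<..t+h} s \<partial>lborel)"
    proof (intro nn_integral_mono)
      fix s
      show "ennreal (g s) * indicator {t<..t+h} s \<le> ennreal (max 0 (g t + \<epsilon>)) * indicator {t<..t+h} s"
      proof (cases "s \<in> {t<..t+h}")
        case True
        then have "dist (g s) (g t) < \<epsilon>" using h t by (intro d(2)) (auto simp: dist_real_def)
        then have "ennreal (g s) \<le> ennreal (max 0 (g t + \<epsilon>))" by (intro ennreal_leI) (auto simp: dist_real_def)
        then show ?thesis using True by (simp del: ennreal_max_0)
      qed simp
    qed
    also have "\<dots> = ennreal (max 0 (g t + \<epsilon>) * h)"
      using h by (simp add: nn_integral_cmult_indicator ennreal_mult del: ennreal_max_0)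
    finally show ?thesis using h by (simp add: ennreal_le_iff)
  qed
  then show ?thesis using d(1) unfolding eventually_at_right_field by blast
qed

lemma density_nonneg_if_window_prob_pos:
  assumes D: "distributed M lborel X (\<lambda>s. ennreal (g s))" and g: "continuous_on {0..} g"
    and t: "0 \<le> t" and pos: "\<And>h. 0 < h \<Longrightarrow> 0 < window_prob X t h"
  shows "0 \<le> g t"
proof (rule ccontr)
  assume "\<not> 0 \<le> g t"
  then have "\<forall>\<^sub>F h in at_right 0. window_prob X t h \<le> 0 * h"
    using window_prob_le_density[OF D g t, of "- g t / 2"] by simp
  moreover have "\<forall>\<^sub>F h in at_right (0::real). 0 < h" by (rule eventually_at_right_less)
  ultimately have "\<forall>\<^sub>F h in at_right (0::real). False"
    by eventually_elim (use pos in force)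
  then show False by simp
qed

lemma window_prob_rate_le_density:
  assumes D: "distributed M lborel X (\<lambda>s. ennreal (g s))" and g: "continuous_on {0..} g"
    and t: "0 \<le> t" and f: "(f \<longlongrightarrow> c) (at_right 0)"
    and below: "\<forall>\<^sub>F h in at_right 0. f h * h \<le> window_prob X t h"
  shows "c \<le> max 0 (g t)"
proof (rule field_le_epsilon)
  fix \<epsilon> :: real assume "0 < \<epsilon>"
  have "\<forall>\<^sub>F h in at_right 0. f h \<le> max 0 (g t + \<epsilon>)"
    using window_prob_le_density[OF D g t \<open>0 < \<epsilon>\<close>] below eventually_at_right_less
  proof eventually_elim
    case (elim h)
    then show ?case by (metis mult_le_cancel_right_pos order.trans)
  qed
  then have "c \<le> max 0 (g t + \<epsilon>)" using f by (intro tendsto_upperbound) auto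
  then show "c \<le> max 0 (g t) + \<epsilon>" using \<open>0 < \<epsilon>\<close> by (auto simp: max_def split: if_splits)
qed

end

lemma birth_state_eq_enat_iff:
  "birth_state n0 \<tau> t \<omega> = enat k \<longleftrightarrow>
    n0 \<le> k \<and> t < (\<Sum>l=n0..k. \<tau> l \<omega>) \<and> (\<forall>j\<in>{n0..<k}. (\<Sum>l=n0..j. \<tau> l \<omega>) \<le> t)"
proof -
  let ?P = "\<lambda>k. n0 \<le> k \<and> t < (\<Sum>l=n0..k. \<tau> l \<omega>)"
  have "birth_state n0 \<tau> t \<omega> = enat k \<longleftrightarrow> ?P k \<and> (\<forall>j<k. \<not> ?P j)"
  proof
    assume state: "birth_state n0 \<tau> t \<omega> = enat k"
    then have ex: "\<exists>k. ?P k" unfolding birth_state_def by (auto split: if_splits)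
    then have "birth_state n0 \<tau> t \<omega> = enat (LEAST k. ?P k)" unfolding birth_state_def by simp
    with state have k: "k = (LEAST k. ?P k)" by simp
    show "?P k \<and> (\<forall>j<k. \<not> ?P j)"
      unfolding k using LeastI_ex[OF ex] not_less_Least[of _ ?P] by blast
  next
    assume P: "?P k \<and> (\<forall>j<k. \<not> ?P j)"
    have "(LEAST k. ?P k) = k"
    proof (rule Least_equality)
      show "?P k" using P by blast
      show "k \<le> y" if "?P y" for y using P that not_less by blast
    qed
    moreover have "\<exists>k. ?P k" using P by blast
    ultimately show "birth_state n0 \<tau> t \<omega> = enat k"
      unfolding birth_state_def by simp
  qed
  also have "\<dots> \<longleftrightarrow> n0 \<le> k \<and> t < (\<Sum>l=n0..k. \<tau> l \<omega>) \<and> (\<forall>j\<in>{n0..<k}. (\<Sum>l=n0..j. \<tau> l \<omega>) \<le> t)"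
    by (auto simp: not_less)
  finally show ?thesis .
qed

lemma explosion_time_le_if_birth_state_infinite:
  assumes t: "0 \<le> t" and nonneg: "\<And>k. n0 \<le> k \<Longrightarrow> 0 \<le> \<tau> k \<omega>"
    and inf: "birth_state n0 \<tau> t \<omega> = \<infinity>"
  shows "explosion_time n0 \<tau> \<omega> \<le> t"
proof -
  have "(\<Sum>l=n0..k. \<tau> l \<omega>) \<le> t" if "n0 \<le> k" for k
    using inf that unfolding birth_state_def by (auto split: if_splits simp: not_less)
  moreover have "(\<Sum>i\<le>n. \<tau> (n0 + i) \<omega>) = (\<Sum>l=n0..n0+n. \<tau> l \<omega>)" for n
    by (induction n) (auto simp: add.commute)
  ultimately have partial: "(\<Sum>i\<le>n. \<tau> (n0 + i) \<omega>) \<le> t" for n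
    by simp
  have "summable (\<lambda>i. \<tau> (n0 + i) \<omega>)"
    using nonneg partial by (intro bounded_imp_summable) auto
  moreover have "(\<Sum>i<n. \<tau> (n0 + i) \<omega>) \<le> t" for n
    using t partial by (cases n) (auto simp: lessThan_Suc_atMost)
  ultimately show ?thesis
    unfolding explosion_time_def by (rule suminf_le_const)
qed

locale birth_process = prob_space M for M :: "'a measure" +
  fixes F :: "nat \<Rightarrow> real" and n0 :: nat and \<tau> :: "nat \<Rightarrow> 'a \<Rightarrow> real"
  assumes rate_pos: "\<And>k. n0 \<le> k \<Longrightarrow> 0 < F k"
    and holding_indep: "indep_vars (\<lambda>_. borel) \<tau> {n0..}"
    and holding_exponential:
      "\<And>k. n0 \<le> k \<Longrightarrow> distributed M lborel (\<tau> k) (\<lambda>s. ennreal (exponential_density (F k) s))"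
begin

definition jump_time :: "nat \<Rightarrow> 'a \<Rightarrow> real" where
  "jump_time k \<omega> = (\<Sum>l=n0..k. \<tau> l \<omega>)"

lemma holding_measurable: "n0 \<le> k \<Longrightarrow> \<tau> k \<in> borel_measurable M"
  using distributed_measurable[OF holding_exponential] by simp

lemma jump_time_measurable[measurable]: "jump_time k \<in> borel_measurable M"
  unfolding jump_time_def by (intro borel_measurable_sum holding_measurable) auto

lemma jump_time_Suc: "n0 \<le> k \<Longrightarrow> jump_time (Suc k) = (\<lambda>\<omega>. jump_time k \<omega> + \<tau> (Suc k) \<omega>)"
  by (simp add: jump_time_def fun_eq_iff)

lemma indep_var_jump_time_holding: "n0 \<le> k \<Longrightarrow> indep_var borel (jump_time k) borel (\<tau> (Suc k))"
  using indep_var_sum_disjoint[OF holding_indep, of "{n0..k}" "{Suc k}"]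
  by (simp add: jump_time_def[abs_def])

lemma indep_var_holding_jump_time: "n0 \<le> k \<Longrightarrow> indep_var borel (\<tau> (Suc k)) borel (jump_time k)"
  using indep_var_sum_disjoint[OF holding_indep, of "{Suc k}" "{n0..k}"]
  by (simp add: jump_time_def[abs_def])

lemma AE_holding_nonneg: "AE \<omega> in M. \<forall>k\<ge>n0. 0 \<le> \<tau> k \<omega>"
  using AE_exponential_nonneg[OF holding_exponential rate_pos] by (auto simp: AE_all_countable)

lemma exp_tilted_mono_jump_time:
  assumes "n0 \<le> m" "m \<le> k"
  shows "exp_tilted_mono (F m) (jump_time k)"
proof -
  have "jump_time k = (\<lambda>\<omega>. (\<Sum>l\<in>{n0..k} - {m}. \<tau> l \<omega>) + \<tau> m \<omega>)"
    using assms unfolding jump_time_def fun_eq_iff by (subst sum.remove[of _ m]) auto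
  moreover have "indep_var borel (\<lambda>\<omega>. \<Sum>l\<in>{n0..k} - {m}. \<tau> l \<omega>) borel (\<lambda>\<omega>. \<Sum>l\<in>{m}. \<tau> l \<omega>)"
    using assms by (intro indep_var_sum_disjoint[OF holding_indep]) auto
  ultimately show ?thesis
    using assms exp_tilted_mono_exponential[OF holding_exponential rate_pos]
    by (simp add: exp_tilted_mono_add)
qed

lemma window_prob_jump_time_Suc_le:
  assumes "n0 \<le> m" "m \<le> k" "F m < F (Suc k)"
  shows "window_prob (jump_time (Suc k)) t h \<le> F (Suc k) / (F (Suc k) - F m) * window_prob (jump_time k) t h"
proof -
  have "window_prob (\<lambda>\<omega>. \<tau> (Suc k) \<omega> + jump_time k \<omega>) t h \<le>
      F (Suc k) / (F (Suc k) - F m) * window_prob (jump_time k) t h"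
    using assms rate_pos[of m]
    by (intro window_prob_add_exponential_le indep_var_holding_jump_time holding_exponential
        exp_tilted_mono_jump_time) auto
  moreover have "jump_time (Suc k) = (\<lambda>\<omega>. \<tau> (Suc k) \<omega> + jump_time k \<omega>)"
    using assms by (simp add: jump_time_Suc add.commute)
  ultimately show ?thesis by simp
qed

lemma window_prob_jump_time_add_le:
  assumes "n0 \<le> m" "m \<le> x" and fast: "\<And>l. x < l \<Longrightarrow> l \<le> x + j \<Longrightarrow> 2 * F m < F l"
  shows "window_prob (jump_time (x + j)) t h \<le>
    exp (2 * F m * (\<Sum>l\<in>{x<..x+j}. 1 / F l)) * window_prob (jump_time x) t h"
  using fast
proof (induction j)
  case (Suc j)
  let ?l = "Suc (x + j)"
  have F: "0 < F m" "2 * F m < F ?l" using assms Suc.prems rate_pos by auto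
  have "window_prob (jump_time (x + Suc j)) t h \<le> F ?l / (F ?l - F m) * window_prob (jump_time (x + j)) t h"
    using assms F window_prob_jump_time_Suc_le[of m "x + j"] by simp
  also have "\<dots> \<le> exp (2 * F m / F ?l) * (exp (2 * F m * (\<Sum>l\<in>{x<..x+j}. 1 / F l)) * window_prob (jump_time x) t h)"
    using F Suc by (intro mult_mono div_diff_le_exp window_prob_nonneg) auto
  also have "\<dots> = exp (2 * F m * (\<Sum>l\<in>{x<..x + Suc j}. 1 / F l)) * window_prob (jump_time x) t h"
  proof -
    have "{x<..x + Suc j} = insert ?l {x<..x+j}" by auto
    then show ?thesis by (simp add: exp_add[symmetric] algebra_simps)
  qed
  finally show ?case .
qed simp

lemma window_prob_jump_time_pos:
  assumes "n0 \<le> k" "0 \<le> t" "0 < h"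
  shows "0 < window_prob (jump_time k) t h"
  using assms
proof (induction k arbitrary: t h rule: dec_induct)
  case base
  then show ?case
    using window_prob_exponential_pos[OF holding_exponential rate_pos] by (simp add: jump_time_def)
next
  case (step k)
  have "0 < window_prob (jump_time k) 0 (h / 2) * window_prob (\<tau> (Suc k)) t (h / 2)"
    using step window_prob_exponential_pos[OF holding_exponential rate_pos] by simp
  also have "\<dots> \<le> window_prob (jump_time (Suc k)) t h"
    using window_prob_add_ge[OF indep_var_jump_time_holding[OF step(1)], of 0 "h / 2" t "h / 2"] step(1)
    by (simp add: jump_time_Suc)
  finally show ?case .
qed

lemma sets_birth_state_eq: "{\<omega>\<in>space M. birth_state n0 \<tau> t \<omega> = enat k} \<in> sets M"
proof -
  have "{\<omega>\<in>space M. birth_state n0 \<tau> t \<omega> = enat k} =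
      {\<omega>\<in>space M. n0 \<le> k \<and> t < jump_time k \<omega> \<and> (\<forall>j\<in>{n0..<k}. jump_time j \<omega> \<le> t)}"
    by (simp add: birth_state_eq_enat_iff jump_time_def)
  also have "\<dots> \<in> sets M" by measurable
  finally show ?thesis .
qed

lemma prob_birth_state_le_window_prob:
  assumes "n0 < k" "0 \<le> h"
  shows "prob {\<omega>\<in>space M. birth_state n0 \<tau> t \<omega> = enat k} * (1 - exp (- F k * h)) \<le>
    window_prob (jump_time k) t h"
proof -
  obtain j where j: "k = Suc j" "n0 \<le> j" using assms by (cases k) auto
  have \<tau>: "\<tau> k \<in> borel_measurable M" using assms holding_measurable by simp
  have "{\<omega>\<in>space M. birth_state n0 \<tau> t \<omega> = enat k} \<subseteq>
      {\<omega>\<in>space M. jump_time j \<omega> \<le> t \<and> t < jump_time j \<omega> + \<tau> k \<omega>}"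
    using j by (auto simp: birth_state_eq_enat_iff jump_time_def)
  then have "prob {\<omega>\<in>space M. birth_state n0 \<tau> t \<omega> = enat k} * (1 - exp (- F k * h)) \<le>
      (1 - exp (- F k * h)) * prob {\<omega>\<in>space M. jump_time j \<omega> \<le> t \<and> t < jump_time j \<omega> + \<tau> k \<omega>}"
    using assms rate_pos[of k] \<tau> by (subst mult.commute) (intro mult_left_mono finite_measure_mono, auto)
  also have "\<dots> = prob {\<omega>\<in>space M. jump_time j \<omega> \<le> t \<and> t < jump_time j \<omega> + \<tau> k \<omega> \<and> jump_time j \<omega> + \<tau> k \<omega> \<le> t + h}"
    using assms j rate_pos[of k]
    by (simp add: prob_exponential_overshoot[OF indep_var_jump_time_holding holding_exponential])
  also have "\<dots> \<le> window_prob (jump_time k) t h"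
    unfolding window_prob_def using j \<tau> by (intro finite_measure_mono) (auto simp: jump_time_Suc)
  finally show ?thesis .
qed

lemma prob_birth_state_gt_le_suminf:
  assumes "0 \<le> t"
  shows "summable (\<lambda>i. prob {\<omega>\<in>space M. birth_state n0 \<tau> t \<omega> = enat (x + 1 + i)})"
    and "prob {\<omega>\<in>space M. enat x < birth_state n0 \<tau> t \<omega> \<and> t < explosion_time n0 \<tau> \<omega>} \<le>
      (\<Sum>i. prob {\<omega>\<in>space M. birth_state n0 \<tau> t \<omega> = enat (x + 1 + i)})"
proof -
  let ?A = "\<lambda>i. {\<omega>\<in>space M. birth_state n0 \<tau> t \<omega> = enat (x + 1 + i)}"
  have sums: "(\<lambda>i. prob (?A i)) sums prob (\<Union>i. ?A i)"
    using sets_birth_state_eq by (intro finite_measure_UNION) (auto simp: disjoint_family_on_def)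
  then show "summable (\<lambda>i. prob (?A i))" by (rule sums_summable)
  have "AE \<omega> in M. enat x < birth_state n0 \<tau> t \<omega> \<and> t < explosion_time n0 \<tau> \<omega> \<longrightarrow> \<omega> \<in> (\<Union>i. ?A i)"
    using AE_space AE_holding_nonneg
  proof eventually_elim
    case (elim \<omega>)
    show ?case
    proof (cases "birth_state n0 \<tau> t \<omega>")
      case (enat k)
      then show ?thesis using elim by (auto intro!: exI[of _ "k - x - 1"])
    next
      case infinity
      then show ?thesis
        using elim assms explosion_time_le_if_birth_state_infinite[of t n0 \<tau> \<omega>] by auto
    qed
  qed
  then have "prob {\<omega>\<in>space M. enat x < birth_state n0 \<tau> t \<omega> \<and> t < explosion_time n0 \<tau> \<omega>} \<le> prob (\<Union>i. ?A i)"
    using sets_birth_state_eq by (intro finite_measure_mono_AE) auto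
  then show "prob {\<omega>\<in>space M. enat x < birth_state n0 \<tau> t \<omega> \<and> t < explosion_time n0 \<tau> \<omega>} \<le> (\<Sum>i. prob (?A i))"
    using sums by (simp add: sums_iff)
qed

end

locale explosive_birth_process = birth_process +
  assumes summable_inverse_rate: "summable (\<lambda>k. 1 / F k)"
begin

lemma rate_tendsto_top: "filterlim F at_top sequentially"
proof -
  have "(\<lambda>k. 1 / F k) \<longlonglongrightarrow> 0"
    using summable_inverse_rate by (rule summable_LIMSEQ_zero)
  moreover have "\<forall>\<^sub>F k in sequentially. 0 < 1 / F k"
    using rate_pos by (auto simp: eventually_sequentially)
  ultimately have "filterlim (\<lambda>k. inverse (1 / F k)) at_top sequentially"
    by (rule filterlim_inverse_at_top)
  then show ?thesis by simp
qed

lemma summable_inverse_rate_shift: "summable (\<lambda>i. 1 / F (n + i))"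
  using summable_ignore_initial_segment[OF summable_inverse_rate, of n] by (simp add: add.commute)

lemma sum_inverse_rate_le: "n0 \<le> x \<Longrightarrow> (\<Sum>l\<in>{x<..k}. 1 / F l) \<le> (\<Sum>i. 1 / F (n0 + i))"
proof -
  assume "n0 \<le> x"
  have "(\<Sum>l\<in>{x<..k}. 1 / F l) = (\<Sum>l\<in>{(Suc x - n0) + n0..(k - n0) + n0}. 1 / F l)"
    using \<open>n0 \<le> x\<close> by (cases "x < k") (auto simp: atLeastSucAtMost_greaterThanAtMost)
  also have "\<dots> = (\<Sum>i\<in>{Suc x - n0..k - n0}. 1 / F (n0 + i))"
    by (simp add: sum.atLeastAtMost_shift_bounds comp_def)
  also have "\<dots> \<le> (\<Sum>i. 1 / F (n0 + i))"
    using summable_inverse_rate_shift rate_pos by (intro sum_le_suminf) (auto intro: less_imp_le)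
  finally show ?thesis .
qed

lemma window_prob_jump_time_uniform_bound:
  obtains C x0 where "0 < C" "n0 < x0"
    "\<And>x k t h. x0 \<le> x \<Longrightarrow> x \<le> k \<Longrightarrow> window_prob (jump_time k) t h \<le> C * window_prob (jump_time x) t h"
proof -
  define \<mu> where "\<mu> = F n0"
  obtain N where N: "\<And>l. N \<le> l \<Longrightarrow> 2 * \<mu> < F l"
    using rate_tendsto_top unfolding filterlim_at_top_dense eventually_sequentially by blast
  define C where "C = exp (2 * \<mu> * (\<Sum>i. 1 / F (n0 + i)))"
  have "window_prob (jump_time k) t h \<le> C * window_prob (jump_time x) t h"
    if x: "Suc (max n0 N) \<le> x" "x \<le> k" for x k t h
  proof -
    have "window_prob (jump_time (x + (k - x))) t h \<le>
        exp (2 * \<mu> * (\<Sum>l\<in>{x<..x + (k - x)}. 1 / F l)) * window_prob (jump_time x) t h"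
      unfolding \<mu>_def using x N by (intro window_prob_jump_time_add_le) (auto simp: \<mu>_def)
    also have "\<dots> \<le> C * window_prob (jump_time x) t h"
      unfolding C_def using x rate_pos[of n0] sum_inverse_rate_le[of x]
      by (intro mult_right_mono window_prob_nonneg) (auto simp: \<mu>_def)
    finally show ?thesis using x by simp
  qed
  then show thesis by (intro that[of C "Suc (max n0 N)"]) (auto simp: C_def)
qed

lemma prob_birth_state_le_density:
  assumes dens: "\<And>x. n0 \<le> x \<Longrightarrow> distributed M lborel (jump_time x) (\<lambda>s. ennreal (g x s))"
    and cont: "\<And>x. n0 \<le> x \<Longrightarrow> continuous_on {0..} (g x)"
  obtains C x0 where "n0 < x0"
    "\<And>x k t. x0 \<le> x \<Longrightarrow> x \<le> k \<Longrightarrow> 0 \<le> t \<Longrightarrow>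
      prob {\<omega>\<in>space M. birth_state n0 \<tau> t \<omega> = enat k} * F k \<le> C * g x t"
proof -
  obtain C x0 where C: "0 < C" "n0 < x0"
    and window_le: "\<And>x k t h. x0 \<le> x \<Longrightarrow> x \<le> k \<Longrightarrow>
      window_prob (jump_time k) t h \<le> C * window_prob (jump_time x) t h"
    by (rule window_prob_jump_time_uniform_bound) blast
  have "prob {\<omega>\<in>space M. birth_state n0 \<tau> t \<omega> = enat k} * F k \<le> C * g x t"
    if x: "x0 \<le> x" "x \<le> k" and t: "0 \<le> t" for x k t
  proof -
    let ?p = "prob {\<omega>\<in>space M. birth_state n0 \<tau> t \<omega> = enat k}"
    have "0 \<le> g x t"
      using x C t window_prob_jump_time_pos[of x t]
      by (intro density_nonneg_if_window_prob_pos[OF dens cont t]) auto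
    moreover have "?p / C * F k \<le> max 0 (g x t)"
    proof (rule window_prob_rate_le_density[OF dens cont t])
      show "((\<lambda>h. ?p / C * ((1 - exp (- F k * h)) / h)) \<longlongrightarrow> ?p / C * F k) (at_right 0)"
        by (intro tendsto_mult_left tendsto_one_minus_exp_div)
      show "\<forall>\<^sub>F h in at_right 0. ?p / C * ((1 - exp (- F k * h)) / h) * h \<le> window_prob (jump_time x) t h"
        using eventually_at_right_less
      proof eventually_elim
        case (elim h)
        have "?p * (1 - exp (- F k * h)) \<le> window_prob (jump_time k) t h"
          using x C elim by (intro prob_birth_state_le_window_prob) auto
        also have "\<dots> \<le> C * window_prob (jump_time x) t h"
          using x by (rule window_le)
        finally have "?p * (1 - exp (- F k * h)) / C \<le> window_prob (jump_time x) t h"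
          using C by (simp add: pos_divide_le_eq mult.commute)
        moreover have "?p / C * ((1 - exp (- F k * h)) / h) * h = ?p * (1 - exp (- F k * h)) / C"
          using elim by simp
        ultimately show ?case by simp
      qed
    qed (use x C in auto)
    ultimately show ?thesis using C by (simp add: field_simps)
  qed
  with C show thesis by (intro that) auto
qed

lemma prob_birth_state_gt_le:
  assumes t: "0 \<le> t" and x: "n0 \<le> x"
    and bound: "\<And>k. x < k \<Longrightarrow> prob {\<omega>\<in>space M. birth_state n0 \<tau> t \<omega> = enat k} * F k \<le> c"
  shows "prob {\<omega>\<in>space M. enat x < birth_state n0 \<tau> t \<omega> \<and> t < explosion_time n0 \<tau> \<omega>} \<le>
    c * (\<Sum>i. 1 / F (x + 1 + i))"
proof -
  have le: "prob {\<omega>\<in>space M. birth_state n0 \<tau> t \<omega> = enat (x + 1 + i)} \<le> c * (1 / F (x + 1 + i))" for i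
    using bound[of "x + 1 + i"] rate_pos[of "x + 1 + i"] x by (simp add: pos_le_divide_eq)
  have "prob {\<omega>\<in>space M. enat x < birth_state n0 \<tau> t \<omega> \<and> t < explosion_time n0 \<tau> \<omega>} \<le>
      (\<Sum>i. prob {\<omega>\<in>space M. birth_state n0 \<tau> t \<omega> = enat (x + 1 + i)})"
    using t by (rule prob_birth_state_gt_le_suminf)
  also have "\<dots> \<le> (\<Sum>i. c * (1 / F (x + 1 + i)))"
    using le prob_birth_state_gt_le_suminf(1)[OF t] summable_inverse_rate_shift[of "x + 1"]
    by (intro suminf_le summable_mult) auto
  also have "\<dots> = c * (\<Sum>i. 1 / F (x + 1 + i))"
    using summable_inverse_rate_shift by (rule suminf_mult)
  finally show ?thesis .
qed

end

theorem corollary1: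
  fixes M :: "'a measure" and F :: "nat \<Rightarrow> real" and n0 :: nat
    and \<tau> :: "nat \<Rightarrow> 'a \<Rightarrow> real" and g :: "nat \<Rightarrow> real \<Rightarrow> real"
  assumes P: "prob_space M"
    and Fpos: "\<forall>k\<ge>1. F k > 0"
    and Fsum: "summable (\<lambda>k. 1 / F (Suc k))"
    and n0: "n0 \<ge> 1"
    and indep: "prob_space.indep_vars M (\<lambda>_. borel) \<tau> {n0..}"
    and expo: "\<forall>k\<ge>n0. distributed M lborel (\<tau> k) (\<lambda>s. ennreal (exponential_density (F k) s))"
    and dens: "\<forall>x\<ge>n0. distributed M lborel (\<lambda>\<omega>. \<Sum>l=n0..x. \<tau> l \<omega>) (\<lambda>s. ennreal (g x s))"
    and gcont: "\<forall>x\<ge>n0. continuous_on {0..} (g x)"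
  shows "\<exists>(C::real) x0. x0 \<ge> n0 \<and> (\<forall>x\<ge>x0. \<forall>t\<ge>0.
           measure M {\<omega> \<in> space M. birth_state n0 \<tau> t \<omega> = enat x} \<le> C * g x t / F x
         \<and> measure M {\<omega> \<in> space M. birth_state n0 \<tau> t \<omega> > enat x \<and> explosion_time n0 \<tau> \<omega> > t}
             / measure M {\<omega> \<in> space M. explosion_time n0 \<tau> \<omega> > t}
           \<le> C * g x t / measure M {\<omega> \<in> space M. explosion_time n0 \<tau> \<omega> > t}
               * (\<Sum>k. 1 / F (x + 1 + k)))"
proof -
  have "birth_process M F n0 \<tau>"
    using P indep expo Fpos n0 by (intro birth_process.intro birth_process_axioms.intro) auto
  moreover have "summable (\<lambda>k. 1 / F k)"
    using Fsum summable_Suc_iff by blast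
  ultimately interpret explosive_birth_process M F n0 \<tau>
    by (intro explosive_birth_process.intro explosive_birth_process_axioms.intro)
  have dens': "\<And>x. n0 \<le> x \<Longrightarrow> distributed M lborel (jump_time x) (\<lambda>s. ennreal (g x s))"
    using dens by (simp add: jump_time_def[abs_def])
  have gcont': "\<And>x. n0 \<le> x \<Longrightarrow> continuous_on {0..} (g x)"
    using gcont by simp
  show ?thesis
  proof (rule prob_birth_state_le_density[OF dens' gcont'])
    fix C x0
    assume x0: "n0 < x0" and bound: "\<And>x k t. x0 \<le> x \<Longrightarrow> x \<le> k \<Longrightarrow> 0 \<le> t \<Longrightarrow>
      prob {\<omega>\<in>space M. birth_state n0 \<tau> t \<omega> = enat k} * F k \<le> C * g x t"
    show ?thesis
    proof (intro exI[of _ C] exI[of _ x0] conjI allI impI)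
      show "n0 \<le> x0" using x0 by simp
    next
      fix x :: nat and t :: real
      assume x: "x0 \<le> x" and t: "0 \<le> t"
      have "0 < F x" using x x0 rate_pos by simp
      then show "prob {\<omega>\<in>space M. birth_state n0 \<tau> t \<omega> = enat x} \<le> C * g x t / F x"
        using bound[OF x order.refl t] by (simp add: pos_le_divide_eq)
    next
      fix x :: nat and t :: real
      assume x: "x0 \<le> x" and t: "0 \<le> t"
      have "prob {\<omega>\<in>space M. birth_state n0 \<tau> t \<omega> > enat x \<and> explosion_time n0 \<tau> \<omega> > t} \<le>
          C * g x t * (\<Sum>k. 1 / F (x + 1 + k))"
        using x x0 t by (intro prob_birth_state_gt_le bound) auto
      from divide_right_mono[OF this measure_nonneg]
      show "prob {\<omega>\<in>space M. birth_state n0 \<tau> t \<omega> > enat x \<and> explosion_time n0 \<tau> \<omega> > t}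
          / prob {\<omega>\<in>space M. explosion_time n0 \<tau> \<omega> > t}
        \<le> C * g x t / prob {\<omega>\<in>space M. explosion_time n0 \<tau> \<omega> > t} * (\<Sum>k. 1 / F (x + 1 + k))"
        by (simp add: times_divide_eq_left)
    qed
  qed
qed

end
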